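(* Let $\mathcal A$ be a finite alphabet and let $W$ be a finite nonempty set of nonempty words over $\mathcal A$ which are pairwise anagrams (all words of $W$ have the same Parikh vector, i.e. each letter occurs the same number of times in each of them). Let $\psi$ be a morphism on $\mathcal A$ such that for every $a\in\mathcal A$, $\psi(a)$ is a nonempty concatenation of words from $W$, and suppose $\psi$ admits an iterative fixed point. Then the ratio $d=|\psi(w)|/|w|$ is the same for all $w\in W$, and every iterative fixed point of $\psi$ is $d$-automatic.
   Context: An iterative fixed point of a morphism $\psi$ is the infinite word $\lim_{n\to\infty}\psi^n(a)$ for a letter $a$ such that $\psi(a)$ begins with $a$ and $|\psi^n(a)|\to\infty$. For an integer $d\ge 2$, a sequence is $d$-automatic if it is the image under a letter-to-letter map of a fixed point of a morphism all of whose letter-images have length $d$. *)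

theory Defs
  imports Complex_Main "HOL-Library.Multiset"
begin

definition morph_ext :: "('a \<Rightarrow> 'a list) \<Rightarrow> 'a list \<Rightarrow> 'a list" where
  "morph_ext psi w = concat (map psi w)"

definition iter_fixed_point :: "('a \<Rightarrow> 'a list) \<Rightarrow> 'a \<Rightarrow> (nat \<Rightarrow> 'a) \<Rightarrow> bool" where
  "iter_fixed_point psi a x \<longleftrightarrow>
     (\<exists>u. psi a = a # u) \<and>
     filterlim (\<lambda>n. length ((morph_ext psi ^^ n) [a])) at_top sequentially \<and>
     (\<forall>n i. i < length ((morph_ext psi ^^ n) [a]) \<longrightarrow> x i = ((morph_ext psi ^^ n) [a]) ! i)"

text \<open>d-automatic sequences (d \<ge> 2): letter-to-letter image of a fixed point of a
  d-uniform morphism over a finite alphabet (encoded, w.l.o.g., as a finite set of naturals).\<close>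
definition automatic :: "nat \<Rightarrow> (nat \<Rightarrow> 'a) \<Rightarrow> bool" where
  "automatic d x \<longleftrightarrow> d \<ge> 2 \<and>
     (\<exists>(B :: nat set) (tau :: nat \<Rightarrow> nat list) b y (f :: nat \<Rightarrow> 'a).
        finite B \<and> b \<in> B \<and>
        (\<forall>c\<in>B. length (tau c) = d \<and> set (tau c) \<subseteq> B) \<and>
        iter_fixed_point tau b y \<and>
        (\<forall>n. x n = f (y n)))"

end

theory Submission
  imports Defs "HOL-Library.Countable"
begin

text \<open>All words of \<open>W\<close> are anagrams, so they have a common length \<open>L\<close>, and the image of
  every \<open>w \<in> W\<close> is a concatenation of the same number \<open>d\<close> of words of \<open>W\<close>. Hence \<open>\<psi>\<close>
  induces a \<open>d\<close>-uniform morphism on the alphabet \<open>W\<close>. If \<open>\<psi>(a)\<close> starts with \<open>a\<close>, then so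
  does its first block \<open>w\<^sub>1 \<in> W\<close>, and the fixed point of \<open>\<psi>\<close> at \<open>a\<close> is the concatenation of
  the letters of the fixed point of the induced morphism at \<open>w\<^sub>1\<close>. This concatenation is
  again \<open>d\<close>-automatic: the pair (block containing position \<open>n\<close>, offset \<open>n mod L\<close>) determines
  the pairs at the positions \<open>n d, \<dots>, n d + d - 1\<close>, so these pairs form the fixed point of a
  \<open>d\<close>-uniform morphism on a finite alphabet, and each letter is read off its pair.\<close>

lemma morph_ext_append: "morph_ext psi (xs @ ys) = morph_ext psi xs @ morph_ext psi ys"
  by (simp add: morph_ext_def)

lemma funpow_morph_ext_append:
  "(morph_ext psi ^^ n) (xs @ ys) = (morph_ext psi ^^ n) xs @ (morph_ext psi ^^ n) ys"
  by (induction n) (simp_all add: morph_ext_append)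

lemma morph_ext_concat_blocks:
  assumes "\<And>a. psi a = concat (ws a)"
  shows "morph_ext psi w = concat (concat (map ws w))"
  using assms by (induction w) (auto simp: morph_ext_def)

lemma length_concat_const:
  "\<forall>xs\<in>set xss. length xs = L \<Longrightarrow> length (concat xss) = length xss * L"
  by (induction xss) auto

lemma length_morph_ext_blocks:
  assumes "\<And>a. psi a = concat (ws a)" and "\<And>a. set (ws a) \<subseteq> W" and "\<forall>v\<in>W. length v = L"
  shows "length (morph_ext psi w) = length (concat (map ws w)) * L"
proof -
  have "\<forall>v\<in>set (concat (map ws w)). length v = L"
    using assms(2,3) by auto
  then show ?thesis
    unfolding morph_ext_concat_blocks[OF assms(1)] by (rule length_concat_const)
qed

lemma nth_concat_const:
  assumes "\<forall>xs\<in>set xss. length xs = L" and "i < length (concat xss)"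
  shows "concat xss ! i = xss ! (i div L) ! (i mod L)"
  using assms
proof (induction xss arbitrary: i)
  case Nil
  then show ?case by simp
next
  case (Cons xs xss)
  then have "length xs = L" by simp
  show ?case
  proof (cases "i < L")
    case True
    with \<open>length xs = L\<close> show ?thesis by (simp add: nth_append)
  next
    case False
    have "concat (xs # xss) \<noteq> []"
      using Cons.prems(2) by (metis list.size(3) not_less0)
    with Cons.prems(1) have "0 < L"
      by (metis concat_eq_Nil_conv length_0_conv neq0_conv)
    with False Cons.prems \<open>length xs = L\<close> have "i - L < length (concat xss)"
      by auto
    with False \<open>0 < L\<close> Cons.IH[of "i - L"] Cons.prems \<open>length xs = L\<close> show ?thesis
      by (simp add: nth_append le_div_geq le_mod_geq)
  qed
qed

lemma upt_Suc_mult: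
  "[0..<Suc m * d] = [0..<m * d] @ map (\<lambda>k. m * d + k) [0..<d]"
proof -
  have "map (\<lambda>k. m * d + k) [0..<d] = [m * d..<m * d + d]"
    by (rule nth_equalityI) auto
  moreover have "[0..<Suc m * d] = [0..<m * d] @ [m * d..<m * d + d]"
    using upt_add_eq_append[of 0 "m * d" d] by (simp add: add.commute)
  ultimately show ?thesis
    by simp
qed

lemma funpow_uniform_blocks:
  assumes F_append: "\<And>xs ys. F (xs @ ys) = F xs @ F ys"
    and F_z: "\<And>n. F (z n) = concat (map (\<lambda>k. z (n * d + k)) [0..<d])"
  shows "(F ^^ n) (z 0) = concat (map z [0..<d ^ n])"
proof -
  have "F [] = F [] @ F []"
    using F_append[of "[]" "[]"] by simp
  then have F_Nil: "F [] = []"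
    by simp
  have F_prefix: "F (concat (map z [0..<m])) = concat (map z [0..<m * d])" for m
  proof (induction m)
    case (Suc m)
    show ?case
      unfolding upt_Suc_mult using Suc.IH by (simp add: F_append F_z comp_def)
  qed (simp add: F_Nil)
  show ?thesis
    by (induction n) (simp_all add: F_prefix mult.commute)
qed

lemma uniform_fixed_point:
  assumes "2 \<le> d" and tau_y: "\<And>n. tau (y n) = map (\<lambda>k. y (n * d + k)) [0..<d]"
  shows "iter_fixed_point tau (y 0) y"
proof -
  have iterates: "(morph_ext tau ^^ n) [y 0] = map y [0..<d ^ n]" for n
    using funpow_uniform_blocks[of "morph_ext tau" "\<lambda>n. [y n]" d n]
    by (simp add: morph_ext_append tau_y morph_ext_def)
  have "n \<le> d ^ n" for n
    using less_exp[of n] power_mono[of 2 d n] \<open>2 \<le> d\<close> by simp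
  then have "filterlim (\<lambda>n. length ((morph_ext tau ^^ n) [y 0])) at_top sequentially"
    unfolding iterates by (auto intro: filterlim_at_top_mono[OF filterlim_ident])
  moreover have "tau (y 0) = y 0 # map y [1..<d]"
    using \<open>2 \<le> d\<close> by (simp add: tau_y upt_conv_Cons map_Suc_upt[symmetric])
  ultimately show ?thesis
    unfolding iter_fixed_point_def by (simp add: iterates)
qed

lemma automatic_if_blocks_determined:
  fixes y :: "nat \<Rightarrow> 'b::countable" and f :: "'b \<Rightarrow> 'c"
  assumes "2 \<le> d" and "finite (range y)"
    and blocks: "\<And>n m k. y n = y m \<Longrightarrow> k < d \<Longrightarrow> y (n * d + k) = y (m * d + k)"
  shows "automatic d (\<lambda>n. f (y n))"
proof -
  define code where "code n = to_nat (y n)" for n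
  define tau where "tau c = map (\<lambda>k. code (inv code c * d + k)) [0..<d]" for c
  have tau_code: "tau (code n) = map (\<lambda>k. code (n * d + k)) [0..<d]" for n
  proof -
    define m where "m = inv code (code n)"
    have "code m = code n"
      unfolding m_def by (rule f_inv_into_f) simp
    then have "y m = y n"
      by (simp add: code_def)
    then have "code (m * d + k) = code (n * d + k)" if "k < d" for k
      using blocks[OF \<open>y m = y n\<close> that] by (simp add: code_def)
    then show ?thesis
      unfolding tau_def m_def[symmetric] by (intro map_cong) auto
  qed
  have "iter_fixed_point tau (code 0) code"
    using \<open>2 \<le> d\<close> tau_code by (rule uniform_fixed_point)
  moreover have "finite (range code)"
    using finite_imageI[OF \<open>finite (range y)\<close>, of to_nat]
    by (simp add: code_def image_comp comp_def)
  moreover have "\<forall>c\<in>range code. length (tau c) = d \<and> set (tau c) \<subseteq> range code"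
    using tau_code by auto
  moreover have "f (y n) = (f \<circ> from_nat) (code n)" for n
    by (simp add: code_def)
  ultimately show ?thesis
    unfolding automatic_def using \<open>2 \<le> d\<close> by blast
qed

lemma div_mod_mult_add:
  fixes n d k L :: nat
  assumes "0 < L" and "k < d"
  shows "(n * d + k) div L = n div L * d + (n mod L * d + k) div L"
    and "(n * d + k) mod L = (n mod L * d + k) mod L"
    and "(n mod L * d + k) div L < d"
proof -
  have "n * d = (n div L * L + n mod L) * d"
    by simp
  then have split: "n * d + k = (n mod L * d + k) + (n div L * d) * L"
    by (simp only: algebra_simps)
  show "(n * d + k) div L = n div L * d + (n mod L * d + k) div L"
    unfolding split using \<open>0 < L\<close> by (simp add: add.commute)
  show "(n * d + k) mod L = (n mod L * d + k) mod L"
    unfolding split by simp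
  have "Suc (n mod L) * d \<le> L * d"
    using \<open>0 < L\<close> by (intro mult_le_mono1) (simp add: Suc_le_eq)
  with \<open>k < d\<close> have "n mod L * d + k < d * L"
    by (simp add: mult.commute)
  then show "(n mod L * d + k) div L < d"
    by (rule less_mult_imp_div_less)
qed

lemma automatic_concat_words:
  fixes z :: "nat \<Rightarrow> 'b::countable list"
  assumes "2 \<le> d" and "0 < L" and "finite (range z)"
    and z_digit: "\<And>q s. s < d \<Longrightarrow> z (q * d + s) = sigma (z q) ! s"
  shows "automatic d (\<lambda>i. z (i div L) ! (i mod L))"
proof -
  define y where "y i = (z (i div L), i mod L)" for i
  have "range y \<subseteq> range z \<times> {..<L}"
    using \<open>0 < L\<close> by (auto simp: y_def)
  then have "finite (range y)"
    using \<open>finite (range z)\<close> finite_subset by blast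
  moreover have "y (n * d + k) =
      (sigma (fst (y n)) ! ((snd (y n) * d + k) div L), (snd (y n) * d + k) mod L)"
    if "k < d" for n k
    using div_mod_mult_add[OF \<open>0 < L\<close> that, of n] z_digit by (simp add: y_def)
  ultimately have "automatic d (\<lambda>i. case y i of (w, j) \<Rightarrow> w ! j)"
    using \<open>2 \<le> d\<close> by (intro automatic_if_blocks_determined) auto
  then show ?thesis
    by (simp add: y_def)
qed

text \<open>The fixed point of a \<open>d\<close>-uniform morphism \<open>\<sigma>\<close> with \<open>\<sigma>(b)\<close> starting with \<open>b\<close>, read off
  from the base-\<open>d\<close> digits of the position; the guard \<open>d < 2\<close> only ensures termination.\<close>
fun uniform_fp :: "('b \<Rightarrow> 'b list) \<Rightarrow> nat \<Rightarrow> 'b \<Rightarrow> nat \<Rightarrow> 'b" where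
  "uniform_fp sigma d b q =
     (if q = 0 \<or> d < 2 then b else sigma (uniform_fp sigma d b (q div d)) ! (q mod d))"

declare uniform_fp.simps [simp del]

lemma uniform_fp_0 [simp]: "uniform_fp sigma d b 0 = b"
  by (simp add: uniform_fp.simps)

lemma uniform_fp_digit:
  assumes "2 \<le> d" and "sigma b ! 0 = b" and "s < d"
  shows "uniform_fp sigma d b (q * d + s) = sigma (uniform_fp sigma d b q) ! s"
  using assms by (subst uniform_fp.simps) auto

lemma uniform_fp_in:
  assumes "2 \<le> d" and "b \<in> A" and "\<forall>c\<in>A. length (sigma c) = d \<and> set (sigma c) \<subseteq> A"
  shows "uniform_fp sigma d b q \<in> A"
proof (induction q rule: less_induct)
  case (less q)
  show ?case
  proof (cases "q = 0")
    case False
    with \<open>2 \<le> d\<close> less have "uniform_fp sigma d b (q div d) \<in> A"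
      by simp
    with assms have "sigma (uniform_fp sigma d b (q div d)) ! (q mod d) \<in> A"
      by (metis mod_less_divisor nth_mem pos2 order_less_le_trans subsetD)
    with False \<open>2 \<le> d\<close> show ?thesis
      by (subst uniform_fp.simps) simp
  qed (simp add: \<open>b \<in> A\<close>)
qed

lemma uniform_fp_block:
  assumes "2 \<le> d" and "sigma b ! 0 = b" and "length (sigma (uniform_fp sigma d b q)) = d"
  shows "sigma (uniform_fp sigma d b q) = map (\<lambda>s. uniform_fp sigma d b (q * d + s)) [0..<d]"
  using assms by (intro nth_equalityI) (simp_all add: uniform_fp_digit)

lemma funpow_concat_uniform_fp:
  assumes "2 \<le> d" and "b \<in> A" and "sigma b ! 0 = b"
    and sigma_A: "\<forall>c\<in>A. length (sigma c) = d \<and> set (sigma c) \<subseteq> A"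
    and F_append: "\<And>xs ys. F (xs @ ys) = F xs @ F ys"
    and F_sigma: "\<And>c. c \<in> A \<Longrightarrow> F c = concat (sigma c)"
  shows "(F ^^ n) b = concat (map (uniform_fp sigma d b) [0..<d ^ n])"
proof -
  have "F (uniform_fp sigma d b q) = concat (map (\<lambda>s. uniform_fp sigma d b (q * d + s)) [0..<d])"
    for q
  proof -
    have "uniform_fp sigma d b q \<in> A"
      using \<open>2 \<le> d\<close> \<open>b \<in> A\<close> sigma_A by (rule uniform_fp_in)
    with sigma_A F_sigma assms(1,3) show ?thesis
      by (simp add: uniform_fp_block)
  qed
  with F_append funpow_uniform_blocks[of F "uniform_fp sigma d b" d n] show ?thesis
    by simp
qed

lemma iter_fixed_point_not_singleton:
  assumes "iter_fixed_point psi a x"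
  shows "psi a \<noteq> [a]"
proof
  assume "psi a = [a]"
  then have "(morph_ext psi ^^ n) [a] = [a]" for n
    by (induction n) (simp_all add: morph_ext_def)
  with assms have "filterlim (\<lambda>n::nat. 1::nat) at_top sequentially"
    by (simp add: iter_fixed_point_def)
  then have "eventually (\<lambda>n::nat. 2 \<le> (1::nat)) sequentially"
    unfolding filterlim_at_top by blast
  then show False
    by simp
qed

lemma iter_fixed_point_nth_concat:
  assumes fp: "iter_fixed_point psi a x"
    and blocks: "\<And>n. \<exists>m. (morph_ext psi ^^ n) (a # t) = concat (map z [0..<m])"
    and len: "\<And>q. length (z q) = L"
  shows "x i = z (i div L) ! (i mod L)"
proof -
  obtain n where n: "i < length ((morph_ext psi ^^ n) [a])"
    using fp unfolding iter_fixed_point_def filterlim_at_top eventually_sequentially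
    by (metis Suc_le_eq order_refl)
  obtain m where m: "(morph_ext psi ^^ n) (a # t) = concat (map z [0..<m])"
    using blocks by blast
  have prefix: "(morph_ext psi ^^ n) (a # t) = (morph_ext psi ^^ n) [a] @ (morph_ext psi ^^ n) t"
    using funpow_morph_ext_append[of n psi "[a]" t] by simp
  have lens: "\<forall>w\<in>set (map z [0..<m]). length w = L"
    using len by simp
  have i_m: "i < length (concat (map z [0..<m]))"
    using n prefix m by simp
  from n have "x i = concat (map z [0..<m]) ! i"
    using fp prefix m by (simp add: iter_fixed_point_def nth_append)
  also have "\<dots> = map z [0..<m] ! (i div L) ! (i mod L)"
    using lens i_m by (rule nth_concat_const)
  also have "\<dots> = z (i div L) ! (i mod L)"
    using i_m length_concat_const[OF lens] by (simp add: less_mult_imp_div_less)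
  finally show ?thesis .
qed

lemma iter_fixed_point_two_le_blocks:
  assumes fp: "iter_fixed_point psi a x"
    and ws_ne: "\<And>c. ws c \<noteq> []" and psi_ws: "\<And>c. psi c = concat (ws c)"
    and ws_a: "ws a = (a # t) # rest"
  shows "2 \<le> length (concat (map ws (a # t)))"
proof (rule ccontr)
  assume "\<not> 2 \<le> length (concat (map ws (a # t)))"
  then have "length rest + length (concat (map ws t)) = 0"
    unfolding list.map concat.simps ws_a length_Cons length_append by linarith
  then have "rest = []" and "concat (map ws t) = []"
    by simp_all
  moreover from this(2) have "t = []"
    using ws_ne by (cases t) auto
  ultimately have "psi a = [a]"
    by (simp add: psi_ws ws_a)
  with iter_fixed_point_not_singleton[OF fp] show False ..
qed

lemma automatic_iter_fixed_point_blocks: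
  fixes psi :: "'a::countable \<Rightarrow> 'a list"
  assumes "finite W" and "0 < L" and len_W: "\<forall>w\<in>W. length w = L"
    and ws_ne: "\<And>a. ws a \<noteq> []" and ws_W: "\<And>a. set (ws a) \<subseteq> W"
    and psi_ws: "\<And>a. psi a = concat (ws a)"
    and count_W: "\<forall>w\<in>W. length (concat (map ws w)) = d"
    and fp: "iter_fixed_point psi a x"
  shows "automatic d x"
proof -
  define D where "D w = concat (map ws w)" for w
  obtain w1 rest where ws_a: "ws a = w1 # rest"
    using ws_ne by (meson neq_Nil_conv)
  with ws_W have "w1 \<in> W"
    by (metis list.set_intros(1) subsetD)
  with \<open>0 < L\<close> len_W have "w1 \<noteq> []"
    by auto
  moreover obtain u where "psi a = a # u"
    using fp by (auto simp: iter_fixed_point_def)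
  ultimately obtain t where w1: "w1 = a # t"
    using psi_ws ws_a by (cases w1) auto
  have "length (concat (map ws w1)) = d"
    using count_W \<open>w1 \<in> W\<close> by blast
  with iter_fixed_point_two_le_blocks[OF fp ws_ne psi_ws ws_a[unfolded w1]] have "2 \<le> d"
    unfolding w1 by linarith
  have D_W: "\<forall>w\<in>W. length (D w) = d \<and> set (D w) \<subseteq> W"
    using count_W ws_W by (auto simp: D_def)
  have "D w1 ! 0 = w1"
    by (simp add: D_def ws_a w1)
  define z where "z = uniform_fp D d w1"
  have z_W: "z q \<in> W" for q
    unfolding z_def using \<open>2 \<le> d\<close> \<open>w1 \<in> W\<close> D_W by (rule uniform_fp_in)
  have z_digit: "z (q * d + s) = D (z q) ! s" if "s < d" for q s
    unfolding z_def using \<open>2 \<le> d\<close> \<open>D w1 ! 0 = w1\<close> that by (rule uniform_fp_digit)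
  have "(morph_ext psi ^^ n) (a # t) = concat (map z [0..<d ^ n])" for n
    unfolding z_def w1[symmetric]
    using \<open>2 \<le> d\<close> \<open>w1 \<in> W\<close> \<open>D w1 ! 0 = w1\<close> D_W morph_ext_append
  proof (rule funpow_concat_uniform_fp)
    show "morph_ext psi w = concat (D w)" for w
      unfolding D_def by (rule morph_ext_concat_blocks[OF psi_ws])
  qed
  then have "x i = z (i div L) ! (i mod L)" for i
    using len_W z_W by (intro iter_fixed_point_nth_concat[OF fp]) auto
  moreover have "finite (range z)"
    using z_W \<open>finite W\<close> by (meson finite_subset image_subsetI)
  ultimately show ?thesis
    using automatic_concat_words[OF \<open>2 \<le> d\<close> \<open>0 < L\<close> _ z_digit] by presburger
qed

theorem theorem4p1:
  fixes W :: "('a :: finite) list set" and psi :: "'a \<Rightarrow> 'a list"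
  assumes "finite W" and "W \<noteq> {}" and "[] \<notin> W"
    and "\<forall>u\<in>W. \<forall>v\<in>W. mset u = mset v"
    and "\<forall>a. \<exists>ws. ws \<noteq> [] \<and> set ws \<subseteq> W \<and> psi a = concat ws"
    and "\<exists>a x. iter_fixed_point psi a x"
  shows "\<exists>d::nat. (\<forall>w\<in>W. real (length (morph_ext psi w)) / real (length w) = real d) \<and>
           (\<forall>a x. iter_fixed_point psi a x \<longrightarrow> automatic d x)"
proof -
  obtain ws where ws_ne: "\<And>a. ws a \<noteq> []" and ws_W: "\<And>a. set (ws a) \<subseteq> W"
    and psi_ws: "\<And>a. psi a = concat (ws a)"
    using assms(5) by metis
  obtain w0 where "w0 \<in> W"
    using assms(2) by blast
  define L where "L = length w0"
  define d where "d = length (concat (map ws w0))"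
  have len_W: "\<forall>w\<in>W. length w = L"
    using assms(4) \<open>w0 \<in> W\<close> by (metis L_def mset_eq_length)
  have count_W: "\<forall>w\<in>W. length (concat (map ws w)) = d"
    using assms(4) \<open>w0 \<in> W\<close> by (metis d_def length_concat map_map mset_map sum_mset_sum_list)
  have "0 < L"
    using assms(3) \<open>w0 \<in> W\<close> by (metis L_def length_greater_0_conv)
  have "real (length (morph_ext psi w)) / real (length w) = real d" if "w \<in> W" for w
    using length_morph_ext_blocks[OF psi_ws ws_W len_W, where w = w] count_W len_W that \<open>0 < L\<close>
    by simp
  moreover have "automatic d x" if "iter_fixed_point psi a x" for a x
    using automatic_iter_fixed_point_blocks[OF assms(1) \<open>0 < L\<close> len_W ws_ne ws_W psi_ws count_W that] .
  ultimately show ?thesis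
    by blast
qed

end
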